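(* Assume $1-1/\gamma<\beta<1$, let $\chi=\frac{1-\gamma(1-\beta)}{\beta}\in(0,1)$ and $0<\epsilon<\chi$. Define the event $$A_{N,\epsilon}=\Big\{\{i\ge1:\ w_i\ge N^{-(\chi-\epsilon)}\}\subseteq\{I^N_1,\dots,I^N_N\}\Big\}.$$ Then $\lim_{N\to\infty}\log(N)\,\mathbb P(A_{N,\epsilon}^c)=0$.
   Context: Fix $\gamma>1$, $\beta\in(0,1)$. $\Xi$ is a Poisson point process on $(0,\infty)$ with intensity $x^{-2}dx$ and atoms $w_1>w_2>\cdots$. Conditionally on $\Xi$, $I^N=(I^N_1,\dots,I^N_N)$ are $N$ indices sampled without replacement from $\{1,\dots,\lceil N^\gamma\rceil\}$ with weights $w_i^\beta$ (each successive draw picks a not-yet-drawn index $i$ with probability proportional to $w_i^\beta$ among the not-yet-drawn ones). *)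

theory Defs
  imports "HOL-Probability.Probability"
begin

definition ppp_intensity :: "real set \<Rightarrow> real" where
  "ppp_intensity B = (LINT t:B|lborel. 1 / t ^ 2)"

definition atom_count :: "(nat \<Rightarrow> real) \<Rightarrow> real set \<Rightarrow> nat" where
  "atom_count w B = card {i. 1 \<le> i \<and> w i \<in> B}"

text \<open>The random sequence w (indexed from 1, w 1 > w 2 > ... > 0) enumerates the atoms of a
  Poisson point process on (0,infinity) with intensity x^(-2) dx: for Borel sets bounded away
  from 0 the counts are Poisson(Lambda(B)) distributed, and counts of disjoint such sets are
  independent.\<close>
definition is_ppp_atoms :: "'a measure \<Rightarrow> ('a \<Rightarrow> nat \<Rightarrow> real) \<Rightarrow> bool" where
  "is_ppp_atoms M w \<longleftrightarrow>
     prob_space M \<and>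
     (\<forall>i. (\<lambda>x. w x i) \<in> borel_measurable M) \<and>
     (\<forall>x. (\<forall>i\<ge>1. 0 < w x i) \<and> (\<forall>i\<ge>1. w x (Suc i) < w x i)) \<and>
     (\<forall>B t. B \<in> sets borel \<longrightarrow> 0 < t \<longrightarrow> B \<subseteq> {t..} \<longrightarrow>
        (\<forall>k. measure M {x \<in> space M. atom_count (w x) B = k}
              = ppp_intensity B ^ k / fact k * exp (- ppp_intensity B))) \<and>
     (\<forall>(J::nat set) B t. finite J \<longrightarrow> 0 < t \<longrightarrow> (\<forall>j\<in>J. B j \<in> sets borel \<and> B j \<subseteq> {t..}) \<longrightarrow>
        disjoint_family_on B J \<longrightarrow>
        prob_space.indep_vars M (\<lambda>_. count_space UNIV) (\<lambda>j x. atom_count (w x) (B j)) J)"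

definition weighted_pick :: "(nat \<Rightarrow> real) \<Rightarrow> nat set \<Rightarrow> nat pmf" where
  "weighted_pick p S = embed_pmf (\<lambda>i. if i \<in> S then p i / sum p S else 0)"

primrec sample_wor :: "(nat \<Rightarrow> real) \<Rightarrow> nat \<Rightarrow> nat set \<Rightarrow> nat list pmf" where
  "sample_wor p 0 S = return_pmf []"
| "sample_wor p (Suc k) S =
     bind_pmf (weighted_pick p S) (\<lambda>i. map_pmf (\<lambda>is. i # is) (sample_wor p k (S - {i})))"

end

theory Submission
  imports Defs "HOL-Real_Asymp.Real_Asymp"
begin

text \<open>Write a = chi - eps, t = N^(-a), n = ceil(N^gamma) and delta = eps/2. Outside a bad
  event the configuration is tame: some atom lies above 1/n; at most n atoms lie above t, so every
  atom with w_i >= t has index at most n; and w_j < N^delta / j for all j <= n, so the urn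
  {1..n} has total weight at most Q = N^(delta beta) n^(1-beta) / (1-beta). For a tame
  configuration each heavy index escapes all N draws with probability at most
  (1 - t^beta/Q)^N <= exp (- N t^beta / Q), and N t^beta / Q grows like a positive power of N
  because 1 - a beta - gamma (1-beta) = beta eps > 0. Poisson tail bounds make the bad event
  O(exp (-N) + N^(a-gamma) + N^(-delta)); all error terms decay polynomially, which beats log N.\<close>

lemma pmf_weighted_pick:
  assumes "finite S" "S \<noteq> {}" "\<And>j. j \<in> S \<Longrightarrow> 0 < p j"
  shows "pmf (weighted_pick p S) j = (if j \<in> S then p j / sum p S else 0)"
proof -
  have pos: "0 < sum p S" using assms by (simp add: sum_pos)
  let ?f = "\<lambda>i. if i \<in> S then p i / sum p S else 0"
  have nonneg: "\<And>i. 0 \<le> ?f i" using assms pos by (auto intro: less_imp_le)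
  have "(\<integral>\<^sup>+x. ennreal (?f x) \<partial>count_space UNIV) = (\<integral>\<^sup>+x. ennreal (?f x) \<partial>count_space S)"
    by (auto simp: nn_integral_count_space_indicator intro!: nn_integral_cong split: split_indicator)
  also have "\<dots> = (\<Sum>x\<in>S. ennreal (?f x))"
    using assms(1) by (simp add: nn_integral_count_space_finite)
  also have "\<dots> = ennreal (\<Sum>x\<in>S. ?f x)"
    using nonneg by (intro sum_ennreal) (metis (no_types, lifting))
  also have "(\<Sum>x\<in>S. ?f x) = 1"
    using pos by (simp add: sum_divide_distrib[symmetric])
  finally show ?thesis
    unfolding weighted_pick_def using pmf_embed_pmf[of ?f, OF nonneg] by simp
qed

lemma set_pmf_weighted_pick:
  assumes "finite S" "S \<noteq> {}" "\<And>j. j \<in> S \<Longrightarrow> 0 < p j"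
  shows "set_pmf (weighted_pick p S) \<subseteq> S"
  using pmf_weighted_pick[OF assms] by (auto simp: set_pmf_eq)

lemma prob_sample_wor_Suc_not_in:
  assumes "finite S" "i \<in> S" "\<And>j. j \<in> S \<Longrightarrow> 0 < p j"
  shows "measure_pmf.prob (sample_wor p (Suc k) S) {Is. i \<notin> set Is}
       = (\<Sum>j\<in>S - {i}. p j / sum p S * measure_pmf.prob (sample_wor p k (S - {j})) {Is. i \<notin> set Is})"
proof -
  let ?W = "weighted_pick p S"
  let ?g = "\<lambda>j. if j = i then 0 else measure_pmf.prob (sample_wor p k (S - {j})) {Is. i \<notin> set Is}"
  have S: "S \<noteq> {}" using assms(2) by auto
  have supp: "set_pmf ?W \<subseteq> S" by (rule set_pmf_weighted_pick[OF assms(1) S assms(3)])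
  have "emeasure (sample_wor p (Suc k) S) {Is. i \<notin> set Is}
      = (\<integral>\<^sup>+j. emeasure (sample_wor p k (S - {j})) ((\<lambda>Is. j # Is) -` {Is. i \<notin> set Is}) \<partial>?W)"
    by (simp add: map_pmf_rep_eq emeasure_distr)
  also have "\<dots> = (\<integral>\<^sup>+j. ennreal (?g j) \<partial>?W)"
    by (intro nn_integral_cong) (auto simp: measure_pmf.emeasure_eq_measure)
  also have "\<dots> = (\<Sum>j\<in>S. ennreal (?g j) * pmf ?W j)"
    using supp assms(1) by (intro nn_integral_measure_pmf_support) auto
  also have "\<dots> = ennreal (\<Sum>j\<in>S. ?g j * pmf ?W j)"
    by (subst sum_ennreal[symmetric]) (auto simp: ennreal_mult)
  also have "(\<Sum>j\<in>S. ?g j * pmf ?W j) = (\<Sum>j\<in>S - {i}. ?g j * pmf ?W j)"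
    using assms by (intro sum.mono_neutral_right) auto
  also have "\<dots> = (\<Sum>j\<in>S - {i}. p j / sum p S * measure_pmf.prob (sample_wor p k (S - {j})) {Is. i \<notin> set Is})"
    using pmf_weighted_pick[OF assms(1) S assms(3)] by (intro sum.cong) auto
  finally have "ennreal (measure_pmf.prob (sample_wor p (Suc k) S) {Is. i \<notin> set Is})
      = ennreal (\<Sum>j\<in>S - {i}. p j / sum p S * measure_pmf.prob (sample_wor p k (S - {j})) {Is. i \<notin> set Is})"
    by (simp add: measure_pmf.emeasure_eq_measure)
  moreover have "0 \<le> (\<Sum>j\<in>S - {i}. p j / sum p S * measure_pmf.prob (sample_wor p k (S - {j})) {Is. i \<notin> set Is})"
    using assms(3) by (intro sum_nonneg mult_nonneg_nonneg divide_nonneg_nonneg)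
      (auto intro: less_imp_le)
  ultimately show ?thesis by simp
qed

lemma prob_sample_wor_not_in_le:
  assumes "finite S" "i \<in> S" "\<And>j. j \<in> S \<Longrightarrow> 0 < p j"
  shows "measure_pmf.prob (sample_wor p k S) {Is. i \<notin> set Is} \<le> (1 - p i / sum p S) ^ k"
  using assms
proof (induction k arbitrary: S)
  case 0
  then show ?case by simp
next
  case (Suc k)
  have total: "0 < sum p S" using Suc.prems by (intro sum_pos) auto
  let ?r = "1 - p i / sum p S"
  have shrunk_urn: "measure_pmf.prob (sample_wor p k (S - {j})) {Is. i \<notin> set Is} \<le> ?r ^ k"
    if "j \<in> S - {i}" for j
  proof -
    have pos: "0 < sum p (S - {j})" using Suc.prems that by (intro sum_pos) auto
    have "p i \<le> sum p (S - {j})"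
      using Suc.prems that by (intro member_le_sum) (auto intro: less_imp_le)
    moreover have "sum p (S - {j}) \<le> sum p S"
      using Suc.prems that by (intro sum_mono2) (auto intro: less_imp_le)
    moreover have "p i / sum p S \<le> p i / sum p (S - {j})"
      using calculation pos Suc.prems by (intro divide_left_mono) (auto intro: less_imp_le)
    ultimately have "1 - p i / sum p (S - {j}) \<le> ?r" "0 \<le> 1 - p i / sum p (S - {j})"
      using pos by auto
    then have "(1 - p i / sum p (S - {j})) ^ k \<le> ?r ^ k"
      by (rule power_mono)
    moreover have "measure_pmf.prob (sample_wor p k (S - {j})) {Is. i \<notin> set Is}
        \<le> (1 - p i / sum p (S - {j})) ^ k"
      using Suc.prems that by (intro Suc.IH) auto
    ultimately show ?thesis by linarith
  qed
  have "measure_pmf.prob (sample_wor p (Suc k) S) {Is. i \<notin> set Is}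
      = (\<Sum>j\<in>S - {i}. p j / sum p S * measure_pmf.prob (sample_wor p k (S - {j})) {Is. i \<notin> set Is})"
    by (rule prob_sample_wor_Suc_not_in[OF Suc.prems])
  also have "\<dots> \<le> (\<Sum>j\<in>S - {i}. p j / sum p S * ?r ^ k)"
    using Suc.prems total by (intro sum_mono mult_left_mono shrunk_urn) (auto intro: less_imp_le)
  also have "\<dots> = (\<Sum>j\<in>S - {i}. p j) / sum p S * ?r ^ k"
    by (simp add: sum_distrib_right sum_divide_distrib)
  also have "(\<Sum>j\<in>S - {i}. p j) = sum p S - p i"
    using Suc.prems by (simp add: sum_diff1)
  also have "(sum p S - p i) / sum p S * ?r ^ k = ?r ^ Suc k"
    using total by (simp add: diff_divide_distrib)
  finally show ?case .
qed

lemma prob_sample_wor_misses_heavy_le: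
  fixes w :: "nat \<Rightarrow> real"
  assumes wpos: "\<And>i. i \<in> {1..n} \<Longrightarrow> 0 < w i" and "0 \<le> \<beta>" "0 < t"
    and heavy: "{i. 1 \<le> i \<and> t \<le> w i} \<subseteq> {1..n}"
    and wu: "\<And>j. j \<in> {1..n} \<Longrightarrow> w j \<le> u j" and Q: "(\<Sum>j=1..n. u j powr \<beta>) \<le> Q"
  shows "measure_pmf.prob (sample_wor (\<lambda>i. w i powr \<beta>) N {1..n})
           {Is. \<not> {i. 1 \<le> i \<and> t \<le> w i} \<subseteq> set Is}
         \<le> real n * exp (- (real N * t powr \<beta> / Q))"
proof -
  define p where "p i = w i powr \<beta>" for i
  define H where "H = {i. 1 \<le> i \<and> t \<le> w i}"
  let ?sample = "sample_wor p N {1..n}"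
  have ppos: "0 < p i" if "i \<in> {1..n}" for i
    using wpos[OF that] unfolding p_def by simp
  have "sum p {1..n} \<le> (\<Sum>j=1..n. u j powr \<beta>)"
    unfolding p_def using wpos wu \<open>0 \<le> \<beta>\<close> by (intro sum_mono powr_mono2) (auto intro: less_imp_le)
  with Q have SQ: "sum p {1..n} \<le> Q" by linarith
  have miss: "measure_pmf.prob ?sample {Is. i \<notin> set Is} \<le> exp (- (real N * t powr \<beta> / Q))"
    if "i \<in> H" for i
  proof -
    have i: "i \<in> {1..n}" using heavy that unfolding H_def by blast
    have S: "0 < sum p {1..n}" using ppos i by (intro sum_pos) auto
    have "t powr \<beta> \<le> p i"
      using that \<open>0 < t\<close> \<open>0 \<le> \<beta>\<close> unfolding H_def p_def by (intro powr_mono2) auto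
    then have "t powr \<beta> / Q \<le> p i / sum p {1..n}"
      using S SQ ppos[OF i] by (intro frac_le) auto
    moreover have "p i \<le> sum p {1..n}"
      using i ppos by (intro member_le_sum) (auto intro: less_imp_le)
    ultimately have "1 - p i / sum p {1..n} \<le> exp (- (t powr \<beta> / Q))"
      "0 \<le> 1 - p i / sum p {1..n}"
      using exp_ge_add_one_self[of "- (t powr \<beta> / Q)"] S by auto
    then have "(1 - p i / sum p {1..n}) ^ N \<le> exp (- (t powr \<beta> / Q)) ^ N"
      by (intro power_mono)
    moreover have "measure_pmf.prob ?sample {Is. i \<notin> set Is} \<le> (1 - p i / sum p {1..n}) ^ N"
      using i ppos by (intro prob_sample_wor_not_in_le) auto
    ultimately show ?thesis
      by (simp flip: exp_of_nat_mult)
  qed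
  have finH: "finite H" using heavy finite_subset unfolding H_def by blast
  have "measure_pmf.prob ?sample {Is. \<not> H \<subseteq> set Is}
      = measure_pmf.prob ?sample (\<Union>i\<in>H. {Is. i \<notin> set Is})"
    by (intro arg_cong[where f = "measure_pmf.prob ?sample"]) auto
  also have "\<dots> \<le> (\<Sum>i\<in>H. measure_pmf.prob ?sample {Is. i \<notin> set Is})"
    using finH by (intro measure_pmf.finite_measure_subadditive_finite) auto
  also have "\<dots> \<le> real (card H) * exp (- (real N * t powr \<beta> / Q))"
    using sum_mono[OF miss] by simp
  also have "\<dots> \<le> real n * exp (- (real N * t powr \<beta> / Q))"
    using card_mono[OF _ heavy] unfolding H_def by (intro mult_right_mono) auto
  finally show ?thesis unfolding H_def p_def .
qed

lemma ppp_intensity_atLeast: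
  assumes "0 < (s::real)"
  shows "ppp_intensity {s..} = 1 / s"
proof -
  have hi: "((\<lambda>x::real. 1 / x ^ 2) has_integral 1 / s) {s..}"
    using has_integral_inverse_power_to_inf[of 2 s] assms by simp
  then have "(\<lambda>x::real. 1 / x ^ 2) absolutely_integrable_on {s..}"
    by (subst absolutely_integrable_on_iff_nonneg) auto
  then have "set_integrable lborel {s..} (\<lambda>x::real. 1 / x ^ 2)"
    unfolding set_integrable_def by (subst (asm) integrable_completion) auto
  then have "(LINT x : {s..} | lborel. 1 / x ^ 2) = integral {s..} (\<lambda>x::real. 1 / x ^ 2)"
    by (rule set_borel_integral_eq_integral)
  also have "\<dots> = 1 / s" using hi by (rule integral_unique)
  finally show ?thesis unfolding ppp_intensity_def .
qed

context
  fixes M :: "'a measure" and X :: "'a \<Rightarrow> nat" and \<Lambda> :: real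
  assumes pois: "\<And>k. measure M {x \<in> space M. X x = k} = \<Lambda> ^ k / fact k * exp (- \<Lambda>)"
    and pos: "0 < \<Lambda>"
begin

text \<open>Every level set has positive probability, so none of them can be non-measurable
  (a non-measurable set has measure 0 by convention).\<close>
lemma poisson_level_set_sets: "{x \<in> space M. X x = k} \<in> sets M"
proof (rule ccontr)
  assume "{x \<in> space M. X x = k} \<notin> sets M"
  then have "measure M {x \<in> space M. X x = k} = 0" by (rule measure_notin_sets)
  moreover have "0 < \<Lambda> ^ k / fact k * exp (- \<Lambda>)" using pos by simp
  ultimately show False using pois[of k] by linarith
qed

lemma poisson_upper_tail:
  assumes "prob_space M" and c: "1 \<le> c"
  shows "{x \<in> space M. a \<le> X x} \<in> sets M"
    and "measure M {x \<in> space M. a \<le> X x} \<le> exp (c * \<Lambda>) / c ^ a"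
proof -
  interpret prob_space M by fact
  let ?A = "\<lambda>i. {x \<in> space M. X x = i + a}"
  have tail: "{x \<in> space M. a \<le> X x} = (\<Union>i. ?A i)"
  proof (intro set_eqI iffI)
    fix x assume "x \<in> {x \<in> space M. a \<le> X x}"
    then show "x \<in> (\<Union>i. ?A i)" by (intro UN_I[of "X x - a"]) auto
  qed auto
  show "{x \<in> space M. a \<le> X x} \<in> sets M"
    unfolding tail using poisson_level_set_sets by blast
  have sums_tail: "(\<lambda>i. measure M (?A i)) sums measure M {x \<in> space M. a \<le> X x}"
    unfolding tail using poisson_level_set_sets
    by (intro finite_measure_UNION) (auto simp: disjoint_family_on_def)
  have sums_exp: "(\<lambda>i. (c * \<Lambda>) ^ (i + a) / fact (i + a) / c ^ a)
      sums ((exp (c * \<Lambda>) - (\<Sum>i<a. (c * \<Lambda>) ^ i / fact i)) / c ^ a)"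
    using exp_converges[of "c * \<Lambda>"]
    by (intro sums_divide sums_split_initial_segment) (simp add: divide_inverse mult.commute)
  have termwise: "measure M (?A i) \<le> (c * \<Lambda>) ^ (i + a) / fact (i + a) / c ^ a" for i
  proof -
    have "measure M (?A i) \<le> \<Lambda> ^ (i + a) / fact (i + a)"
      unfolding pois using pos by (intro mult_left_le) auto
    also have "\<dots> = c ^ a * \<Lambda> ^ (i + a) / fact (i + a) / c ^ a"
      using c by simp
    also have "\<dots> \<le> c ^ (i + a) * \<Lambda> ^ (i + a) / fact (i + a) / c ^ a"
      using c pos by (intro divide_right_mono mult_right_mono power_increasing) auto
    finally show ?thesis by (simp add: power_mult_distrib)
  qed
  have "measure M {x \<in> space M. a \<le> X x}
      \<le> (exp (c * \<Lambda>) - (\<Sum>i<a. (c * \<Lambda>) ^ i / fact i)) / c ^ a"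
    by (rule sums_le[OF termwise sums_tail sums_exp])
  also have "\<dots> \<le> exp (c * \<Lambda>) / c ^ a"
    using c pos by (intro divide_right_mono) (auto intro!: sum_nonneg)
  finally show "measure M {x \<in> space M. a \<le> X x} \<le> exp (c * \<Lambda>) / c ^ a" .
qed

end

lemma ppp_count_atLeast:
  assumes "is_ppp_atoms M w" "0 < s"
  shows "measure M {x \<in> space M. atom_count (w x) {s..} = k} = (1 / s) ^ k / fact k * exp (- (1 / s))"
proof -
  have "\<forall>B t. B \<in> sets borel \<longrightarrow> 0 < t \<longrightarrow> B \<subseteq> {t..} \<longrightarrow>
      (\<forall>k. measure M {x \<in> space M. atom_count (w x) B = k}
            = ppp_intensity B ^ k / fact k * exp (- ppp_intensity B))"
    using assms(1) unfolding is_ppp_atoms_def by (elim conjE)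
  then show ?thesis using assms(2) ppp_intensity_atLeast[OF \<open>0 < s\<close>] by simp
qed

lemma
  assumes ppp: "is_ppp_atoms M w" and "0 < s"
  shows ppp_count_atLeast_eq_sets: "{x \<in> space M. atom_count (w x) {s..} = k} \<in> sets M"
    and ppp_count_atLeast_ge_sets: "{x \<in> space M. m \<le> atom_count (w x) {s..}} \<in> sets M"
proof -
  have "prob_space M" using ppp unfolding is_ppp_atoms_def by blast
  with ppp_count_atLeast[OF assms] \<open>0 < s\<close>
  show "{x \<in> space M. atom_count (w x) {s..} = k} \<in> sets M"
    and "{x \<in> space M. m \<le> atom_count (w x) {s..}} \<in> sets M"
    by (auto intro: poisson_level_set_sets poisson_upper_tail(1)[of _ _ "1 / s" 1])
qed

text \<open>Chernoff bound for the Poisson(1/s) count, tilted by c = m s (threshold over mean).\<close>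
lemma ppp_count_atLeast_tail:
  assumes ppp: "is_ppp_atoms M w" and "0 < s" and ms: "1 \<le> real m * s"
  shows "measure M {x \<in> space M. m \<le> atom_count (w x) {s..}} \<le> (exp 1 / (real m * s)) ^ m"
proof -
  have "prob_space M" using ppp unfolding is_ppp_atoms_def by blast
  then have "measure M {x \<in> space M. m \<le> atom_count (w x) {s..}}
      \<le> exp (real m * s * (1 / s)) / (real m * s) ^ m"
    using ppp_count_atLeast[OF ppp \<open>0 < s\<close>] \<open>0 < s\<close> ms
    by (intro poisson_upper_tail(2)[of M "\<lambda>x. atom_count (w x) {s..}" "1 / s"]) auto
  also have "\<dots> = (exp 1 / (real m * s)) ^ m"
    using \<open>0 < s\<close> by (simp add: power_divide flip: exp_of_nat_mult)
  finally show ?thesis .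
qed

lemma strict_decreasing_from_one_le:
  fixes w :: "nat \<Rightarrow> real"
  assumes dec: "\<forall>i\<ge>1. w (Suc i) < w i" and "1 \<le> i" "i \<le> j"
  shows "w j \<le> w i"
  using \<open>i \<le> j\<close>
proof (induction j rule: dec_induct)
  case (step m)
  then have "w (Suc m) < w m" using dec \<open>1 \<le> i\<close> by simp
  with step.IH show ?case by simp
qed simp

lemma heavy_atoms_subset:
  fixes w :: "nat \<Rightarrow> real"
  assumes dec: "\<forall>i\<ge>1. w (Suc i) < w i" and "w (Suc n) < t"
  shows "{i. 1 \<le> i \<and> t \<le> w i} \<subseteq> {1..n}"
proof (intro subsetI)
  fix i assume i: "i \<in> {i. 1 \<le> i \<and> t \<le> w i}"
  then have "\<not> Suc n \<le> i"
    using strict_decreasing_from_one_le[OF dec, of "Suc n" i] \<open>w (Suc n) < t\<close> by auto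
  with i show "i \<in> {1..n}" by auto
qed

text \<open>A nonzero count forces the set of counted atoms to be finite, since the cardinality of
  an infinite set is 0.\<close>
lemma atom_below_if_count_less:
  fixes w :: "nat \<Rightarrow> real"
  assumes dec: "\<forall>i\<ge>1. w (Suc i) < w i" and nonempty: "atom_count w {v..} \<noteq> 0"
    and "v \<le> s" "1 \<le> j" and less: "atom_count w {s..} < j"
  shows "w j < s"
proof (rule ccontr)
  assume "\<not> w j < s"
  have "finite {i. 1 \<le> i \<and> w i \<in> {v..}}"
    using nonempty unfolding atom_count_def by (meson card.infinite)
  then have "finite {i. 1 \<le> i \<and> w i \<in> {s..}}"
    by (rule finite_subset[rotated]) (use \<open>v \<le> s\<close> in auto)
  moreover have "{1..j} \<subseteq> {i. 1 \<le> i \<and> w i \<in> {s..}}"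
    using strict_decreasing_from_one_le[OF dec] \<open>\<not> w j < s\<close> by fastforce
  ultimately have "j \<le> atom_count w {s..}"
    unfolding atom_count_def by (metis card_atLeastAtMost card_mono diff_Suc_1)
  with less show False by simp
qed

lemma nn_integral_le_measure_add:
  assumes "prob_space M" and A: "A \<in> sets M"
    and le1: "\<And>x. x \<in> space M \<Longrightarrow> f x \<le> 1"
    and le_c: "\<And>x. x \<in> space M \<Longrightarrow> x \<notin> A \<Longrightarrow> f x \<le> c" and "0 \<le> c"
  shows "enn2real (\<integral>\<^sup>+ x. ennreal (f x) \<partial>M) \<le> measure M A + c"
proof -
  interpret prob_space M by fact
  have "(\<integral>\<^sup>+ x. ennreal (f x) \<partial>M) \<le> (\<integral>\<^sup>+ x. (indicator A x + ennreal c) \<partial>M)"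
  proof (intro nn_integral_mono)
    fix x assume x: "x \<in> space M"
    show "ennreal (f x) \<le> indicator A x + ennreal c"
    proof (cases "x \<in> A")
      case True
      then show ?thesis using le1[OF x] by (simp add: add_increasing2)
    next
      case False
      then show ?thesis using le_c[OF x] by (simp add: ennreal_leI)
    qed
  qed
  also have "\<dots> = ennreal (measure M A + c)"
    using A \<open>0 \<le> c\<close>
    by (simp add: nn_integral_add emeasure_space_1 emeasure_eq_measure ennreal_plus prob_space)
  finally show ?thesis
    using \<open>0 \<le> c\<close> by (simp add: enn2real_leI)
qed

definition expected_miss_prob ::
    "'a measure \<Rightarrow> ('a \<Rightarrow> nat \<Rightarrow> real) \<Rightarrow> real \<Rightarrow> real \<Rightarrow> nat \<Rightarrow> nat \<Rightarrow> real" where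
  "expected_miss_prob M w \<beta> t n N =
     enn2real (\<integral>\<^sup>+ x. ennreal (measure_pmf.prob (sample_wor (\<lambda>i. w x i powr \<beta>) N {1..n})
       {Is. \<not> ({i. 1 \<le> i \<and> w x i \<ge> t} \<subseteq> set Is)}) \<partial>M)"

lemma expected_miss_prob_le:
  fixes M :: "'a measure" and w :: "'a \<Rightarrow> nat \<Rightarrow> real"
  assumes ppp: "is_ppp_atoms M w" and "0 \<le> \<beta>" and v: "0 < v" "v \<le> t"
    and u: "\<And>j. j \<in> {1..n} \<Longrightarrow> v \<le> u j" and Q: "(\<Sum>j=1..n. u j powr \<beta>) \<le> Q"
  shows "expected_miss_prob M w \<beta> t n N
     \<le> measure M {x \<in> space M. atom_count (w x) {v..} = 0}
       + measure M {x \<in> space M. Suc n \<le> atom_count (w x) {t..}}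
       + (\<Sum>j=1..n. measure M {x \<in> space M. j \<le> atom_count (w x) {u j..}})
       + real n * exp (- (real N * t powr \<beta> / Q))"
proof -
  interpret prob_space M using ppp unfolding is_ppp_atoms_def by blast
  have wpos: "\<And>x i. 1 \<le> i \<Longrightarrow> 0 < w x i" and dec: "\<And>x. \<forall>i\<ge>1. w x (Suc i) < w x i"
    using ppp unfolding is_ppp_atoms_def by auto
  define B1 where "B1 = {x \<in> space M. atom_count (w x) {v..} = 0}"
  define B2 where "B2 = {x \<in> space M. Suc n \<le> atom_count (w x) {t..}}"
  define B3 where "B3 j = {x \<in> space M. j \<le> atom_count (w x) {u j..}}" for j
  have sets: "B1 \<in> sets M" "B2 \<in> sets M" "\<And>j. j \<in> {1..n} \<Longrightarrow> B3 j \<in> sets M"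
    unfolding B1_def B2_def B3_def using v u
    by (auto intro!: ppp_count_atLeast_eq_sets ppp_count_atLeast_ge_sets ppp
        dest: order.strict_trans2)
  let ?Bad = "B1 \<union> B2 \<union> (\<Union>j\<in>{1..n}. B3 j)"
  have "expected_miss_prob M w \<beta> t n N \<le> measure M ?Bad + real n * exp (- (real N * t powr \<beta> / Q))"
    unfolding expected_miss_prob_def
  proof (intro nn_integral_le_measure_add)
    fix x assume x: "x \<in> space M" "x \<notin> ?Bad"
    have occupied: "atom_count (w x) {v..} \<noteq> 0" using x unfolding B1_def by auto
    have "w x (Suc n) < t"
      using x v by (intro atom_below_if_count_less[OF dec occupied]) (auto simp: B2_def)
    then have heavy: "{i. 1 \<le> i \<and> t \<le> w x i} \<subseteq> {1..n}"
      by (rule heavy_atoms_subset[OF dec])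
    have "w x j \<le> u j" if "j \<in> {1..n}" for j
      using x that u
      by (intro less_imp_le[OF atom_below_if_count_less[OF dec occupied]]) (auto simp: B3_def not_le)
    then show "measure_pmf.prob (sample_wor (\<lambda>i. w x i powr \<beta>) N {1..n})
        {Is. \<not> {i. 1 \<le> i \<and> t \<le> w x i} \<subseteq> set Is} \<le> real n * exp (- (real N * t powr \<beta> / Q))"
      using wpos \<open>0 \<le> \<beta>\<close> v heavy Q by (intro prob_sample_wor_misses_heavy_le) auto
  qed (use sets prob_space_axioms in auto)
  also have "measure M ?Bad \<le> measure M B1 + measure M B2 + (\<Sum>j=1..n. measure M (B3 j))"
  proof -
    have "measure M ?Bad \<le> measure M (B1 \<union> B2) + measure M (\<Union>j\<in>{1..n}. B3 j)"
      using sets by (intro measure_Un_le) auto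
    also have "measure M (B1 \<union> B2) \<le> measure M B1 + measure M B2"
      using sets by (intro measure_Un_le) auto
    also have "measure M (\<Union>j\<in>{1..n}. B3 j) \<le> (\<Sum>j=1..n. measure M (B3 j))"
      using sets by (intro finite_measure_subadditive_finite) auto
    finally show ?thesis by simp
  qed
  finally show ?thesis unfolding B1_def B2_def B3_def by simp
qed

lemma powr_increment_ge:
  fixes b :: real and n :: nat
  assumes "0 < b" "b < 1"
  shows "(1 - b) * real (Suc n) powr (- b) \<le> real (Suc n) powr (1 - b) - real n powr (1 - b)"
proof (cases "n = 0")
  case False
  define m where "m = real (Suc n)"
  have m: "m = real n + 1" "0 < m" unfolding m_def by auto
  have "real n powr (1 - b) * m powr b \<le> (1 - b) * real n + b * m"
    using assms False m by (intro Youngs_inequality_0) auto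
  also have "\<dots> = (real n + b) * (m powr b * m powr (- b))"
    using m by (simp flip: powr_add) (simp add: algebra_simps)
  finally have "real n powr (1 - b) \<le> (real n + b) * m powr (- b)"
    using m by (simp add: mult.assoc[symmetric] mult_le_cancel_right_pos powr_minus field_simps)
  moreover have "m powr (1 - b) = m * m powr (- b)"
    using m by (simp add: powr_diff powr_minus field_simps)
  ultimately show ?thesis
    unfolding m_def[symmetric] using m by (simp add: algebra_simps)
qed (use assms in simp)

lemma sum_powr_neg_le:
  fixes b :: real
  assumes "0 < b" "b < 1"
  shows "(\<Sum>j=1..n. real j powr (- b)) \<le> real n powr (1 - b) / (1 - b)"
proof (induction n)
  case (Suc n)
  have "real (Suc n) powr (- b) \<le> (real (Suc n) powr (1 - b) - real n powr (1 - b)) / (1 - b)"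
    using powr_increment_ge[OF assms, of n] assms by (simp add: pos_le_divide_eq mult.commute)
  with Suc have "(\<Sum>j=1..Suc n. real j powr (- b))
      \<le> real n powr (1 - b) / (1 - b) + (real (Suc n) powr (1 - b) - real n powr (1 - b)) / (1 - b)"
    by simp
  also have "\<dots> = real (Suc n) powr (1 - b) / (1 - b)"
    by (simp add: diff_divide_distrib)
  finally show ?case .
qed simp

lemma sum_power_le_double:
  fixes q :: real
  assumes "0 \<le> q" "2 * q \<le> 1"
  shows "(\<Sum>j=1..n. q ^ j) \<le> 2 * q"
proof -
  have "(\<Sum>j=1..n. q ^ j) \<le> 2 * q - 2 * q ^ Suc n"
  proof (induction n)
    case (Suc n)
    have "2 * q ^ Suc (Suc n) \<le> q ^ Suc n"
      using assms mult_right_mono[of "2 * q" 1 "q ^ Suc n"] by (simp add: mult_ac)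
    with Suc show ?case by simp
  qed simp
  moreover have "0 \<le> q ^ Suc n" using assms by simp
  ultimately show ?thesis by linarith
qed

lemma nat_ceiling_powr_bounds:
  assumes "1 \<le> N" "1 \<le> \<gamma>"
  shows "real N \<le> real N powr \<gamma>"
    and "real N powr \<gamma> \<le> real (nat \<lceil>real N powr \<gamma>\<rceil>)"
    and "real (nat \<lceil>real N powr \<gamma>\<rceil>) \<le> 2 * real N powr \<gamma>"
proof -
  show N: "real N \<le> real N powr \<gamma>"
    using powr_mono[OF assms(2), of "real N"] assms(1) by simp
  have "real (nat \<lceil>real N powr \<gamma>\<rceil>) = real_of_int \<lceil>real N powr \<gamma>\<rceil>"
    by (simp add: order.trans[OF _ ceiling_mono])
  moreover have "1 \<le> real N" using assms(1) by simp
  ultimately show "real N powr \<gamma> \<le> real (nat \<lceil>real N powr \<gamma>\<rceil>)"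
    and "real (nat \<lceil>real N powr \<gamma>\<rceil>) \<le> 2 * real N powr \<gamma>"
    using of_int_ceiling_le_add_one[of "real N powr \<gamma>"] le_of_int_ceiling[of "real N powr \<gamma>"] N
    by linarith+
qed

lemma prob_many_atoms_above_le:
  assumes ppp: "is_ppp_atoms M w" and N: "1 \<le> N" and "a \<le> \<gamma>"
    and n: "real N powr \<gamma> \<le> real n" and small: "exp 1 * real N powr (a - \<gamma>) \<le> 1"
  shows "measure M {x \<in> space M. Suc n \<le> atom_count (w x) {real N powr (- a)..}}
    \<le> exp 1 * real N powr (a - \<gamma>)"
proof -
  let ?s = "real N powr (- a)"
  let ?r = "exp 1 / (real (Suc n) * ?s)"
  have "real N powr (\<gamma> - a) = real N powr \<gamma> * ?s"
    by (simp add: powr_add[symmetric])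
  also have "\<dots> \<le> real (Suc n) * ?s"
    using n by (intro mult_right_mono) auto
  finally have ms: "real N powr (\<gamma> - a) \<le> real (Suc n) * ?s" .
  moreover have one: "1 \<le> real N powr (\<gamma> - a)"
    using N \<open>a \<le> \<gamma>\<close> by (simp add: ge_one_powr_ge_zero)
  ultimately have "?r \<le> exp 1 / real N powr (\<gamma> - a)"
    using N by (intro divide_left_mono mult_pos_pos) auto
  also have "\<dots> = exp 1 * real N powr (a - \<gamma>)"
    using powr_minus_divide[of "real N" "\<gamma> - a"] by (simp add: divide_inverse)
  finally have r: "?r \<le> exp 1 * real N powr (a - \<gamma>)" .
  have "measure M {x \<in> space M. Suc n \<le> atom_count (w x) {?s..}} \<le> ?r ^ Suc n"
    using N one ms by (intro ppp_count_atLeast_tail ppp) auto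
  also have "\<dots> \<le> ?r"
    using power_decreasing[of 1 "Suc n" ?r] r small by simp
  finally show ?thesis using r by linarith
qed

lemma prob_atoms_above_scaled_le:
  assumes ppp: "is_ppp_atoms M w" and N: "1 \<le> N" and "0 < \<delta>" and "1 \<le> j"
  shows "measure M {x \<in> space M. j \<le> atom_count (w x) {real N powr \<delta> / real j..}}
    \<le> (exp 1 * real N powr (- \<delta>)) ^ j"
proof -
  have "real j * (real N powr \<delta> / real j) = real N powr \<delta>"
    using \<open>1 \<le> j\<close> by simp
  moreover have "1 \<le> real N powr \<delta>"
    using N \<open>0 < \<delta>\<close> by (simp add: ge_one_powr_ge_zero)
  ultimately have "measure M {x \<in> space M. j \<le> atom_count (w x) {real N powr \<delta> / real j..}}
      \<le> (exp 1 / real N powr \<delta>) ^ j"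
    using ppp_count_atLeast_tail[OF ppp, of "real N powr \<delta> / real j" j] N \<open>1 \<le> j\<close> by simp
  then show ?thesis
    by (simp add: powr_minus_divide divide_inverse)
qed

lemma sampling_term_le:
  assumes "0 < \<beta>" "\<beta> < 1" and N: "1 \<le> N"
    and ident: "1 - a * \<beta> - \<gamma> * (1 - \<beta>) = 2 * \<beta> * \<delta>"
    and n: "0 < real n" "real n \<le> 2 * real N powr \<gamma>"
  defines "Q \<equiv> real N powr (\<delta> * \<beta>) * real n powr (1 - \<beta>) / (1 - \<beta>)"
  shows "real n * exp (- (real N * (real N powr (- a)) powr \<beta> / Q))
    \<le> 2 * real N powr \<gamma> * exp (- ((1 - \<beta>) / 2 * real N powr (\<beta> * \<delta>)))"
proof (rule mult_mono)
  let ?E = "real N powr (\<beta> * \<delta>)" and ?F = "real N powr (\<delta> * \<beta>) * real N powr (\<gamma> * (1 - \<beta>))"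
  have Npos: "0 < real N" using N by simp
  have "real n powr (1 - \<beta>) \<le> (2 * real N powr \<gamma>) powr (1 - \<beta>)"
    using n \<open>\<beta> < 1\<close> by (intro powr_mono2) auto
  also have "\<dots> = 2 powr (1 - \<beta>) * real N powr (\<gamma> * (1 - \<beta>))"
    using Npos by (simp add: powr_mult powr_powr)
  also have "\<dots> \<le> 2 * real N powr (\<gamma> * (1 - \<beta>))"
    using powr_mono[of "1 - \<beta>" 1 2] \<open>0 < \<beta>\<close> by (intro mult_right_mono) auto
  finally have "real n powr (1 - \<beta>) \<le> 2 * real N powr (\<gamma> * (1 - \<beta>))" .
  then have "real N powr (\<delta> * \<beta>) * real n powr (1 - \<beta>) \<le> real N powr (\<delta> * \<beta>) * (2 * real N powr (\<gamma> * (1 - \<beta>)))"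
    by (intro mult_left_mono) auto
  then have "Q \<le> 2 * ?F / (1 - \<beta>)"
    unfolding Q_def using \<open>\<beta> < 1\<close> by (intro divide_right_mono) (auto simp: mult_ac)
  moreover have "0 < Q" unfolding Q_def using Npos n \<open>\<beta> < 1\<close> by simp
  ultimately have "?E * ?F / (2 * ?F / (1 - \<beta>)) \<le> ?E * ?F / Q"
    using Npos \<open>\<beta> < 1\<close> by (intro divide_left_mono mult_pos_pos) auto
  moreover have "(1 - \<beta>) / 2 * ?E = ?E * ?F / (2 * ?F / (1 - \<beta>))"
    using Npos \<open>\<beta> < 1\<close> by (simp add: field_simps)
  moreover have "?E * ?F = real N * (real N powr (- a)) powr \<beta>"
  proof -
    have "real N * (real N powr (- a)) powr \<beta> = real N powr (1 + - a * \<beta>)"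
      using Npos powr_add[of "real N" 1 "- a * \<beta>"] by (simp add: powr_powr)
    also have "1 + - a * \<beta> = \<beta> * \<delta> + (\<delta> * \<beta> + \<gamma> * (1 - \<beta>))"
      using ident by (simp add: algebra_simps)
    finally show ?thesis
      by (simp only: powr_add)
  qed
  ultimately have "(1 - \<beta>) / 2 * ?E \<le> real N * (real N powr (- a)) powr \<beta> / Q"
    by (simp only:)
  then show "exp (- (real N * (real N powr (- a)) powr \<beta> / Q))
    \<le> exp (- ((1 - \<beta>) / 2 * real N powr (\<beta> * \<delta>)))"
    by simp
qed (use n in auto)

lemma expected_miss_prob_le_error_terms:
  fixes M :: "'a measure" and w :: "'a \<Rightarrow> nat \<Rightarrow> real" and N :: nat
  assumes ppp: "is_ppp_atoms M w" and \<beta>: "0 < \<beta>" "\<beta> < 1" and "1 \<le> \<gamma>" "a \<le> \<gamma>" "0 < \<delta>"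
    and ident: "1 - a * \<beta> - \<gamma> * (1 - \<beta>) = 2 * \<beta> * \<delta>"
    and N: "1 \<le> N" and small: "exp 1 * real N powr (a - \<gamma>) \<le> 1" "2 * (exp 1 * real N powr (- \<delta>)) \<le> 1"
  shows "expected_miss_prob M w \<beta> (real N powr (- a)) (nat \<lceil>real N powr \<gamma>\<rceil>) N
    \<le> exp (- real N) + exp 1 * real N powr (a - \<gamma>) + 2 * (exp 1 * real N powr (- \<delta>))
      + 2 * real N powr \<gamma> * exp (- ((1 - \<beta>) / 2 * real N powr (\<beta> * \<delta>)))"
proof -
  define n where "n = nat \<lceil>real N powr \<gamma>\<rceil>"
  define u where "u j = real N powr \<delta> / real j" for j :: nat
  have N_le: "real N \<le> real N powr \<gamma>" and n: "real N powr \<gamma> \<le> real n" "real n \<le> 2 * real N powr \<gamma>"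
    using nat_ceiling_powr_bounds[OF N \<open>1 \<le> \<gamma>\<close>] unfolding n_def by auto
  have npos: "0 < real n" using n N_le N by linarith
  have Npos: "0 < real N" using N by simp
  have "1 / real n \<le> real N powr (- a)"
  proof -
    have "real N powr a \<le> real n"
      using powr_mono[OF \<open>a \<le> \<gamma>\<close>, of "real N"] N n by simp
    then show ?thesis
      using npos Npos by (simp add: powr_minus field_simps)
  qed
  moreover have "1 / real n \<le> u j" if "j \<in> {1..n}" for j
  proof -
    have "1 \<le> real N powr \<delta>" using N \<open>0 < \<delta>\<close> by (simp add: ge_one_powr_ge_zero)
    then show ?thesis
      using that unfolding u_def by (simp add: frac_le)
  qed
  moreover have "(\<Sum>j=1..n. u j powr \<beta>) \<le> real N powr (\<delta> * \<beta>) * real n powr (1 - \<beta>) / (1 - \<beta>)"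
  proof -
    have "(\<Sum>j=1..n. u j powr \<beta>) = real N powr (\<delta> * \<beta>) * (\<Sum>j=1..n. real j powr (- \<beta>))"
      unfolding u_def sum_distrib_left using Npos
      by (intro sum.cong) (auto simp: powr_divide powr_powr powr_minus_divide)
    also have "\<dots> \<le> real N powr (\<delta> * \<beta>) * (real n powr (1 - \<beta>) / (1 - \<beta>))"
      using \<beta> by (intro mult_left_mono sum_powr_neg_le) auto
    finally show ?thesis by simp
  qed
  ultimately have "expected_miss_prob M w \<beta> (real N powr (- a)) n N
      \<le> measure M {x \<in> space M. atom_count (w x) {1 / real n..} = 0}
      + measure M {x \<in> space M. Suc n \<le> atom_count (w x) {real N powr (- a)..}}
      + (\<Sum>j=1..n. measure M {x \<in> space M. j \<le> atom_count (w x) {u j..}})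
      + real n * exp (- (real N * (real N powr (- a)) powr \<beta> /
          (real N powr (\<delta> * \<beta>) * real n powr (1 - \<beta>) / (1 - \<beta>))))"
    using npos \<beta> by (intro expected_miss_prob_le[OF ppp]) auto
  moreover have "measure M {x \<in> space M. atom_count (w x) {1 / real n..} = 0} \<le> exp (- real N)"
    using ppp_count_atLeast[OF ppp, of "1 / real n" 0] npos N_le n by simp
  moreover have "measure M {x \<in> space M. Suc n \<le> atom_count (w x) {real N powr (- a)..}}
      \<le> exp 1 * real N powr (a - \<gamma>)"
    using N \<open>a \<le> \<gamma>\<close> n small by (intro prob_many_atoms_above_le[OF ppp])
  moreover have "(\<Sum>j=1..n. measure M {x \<in> space M. j \<le> atom_count (w x) {u j..}})
      \<le> 2 * (exp 1 * real N powr (- \<delta>))"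
  proof -
    have "(\<Sum>j=1..n. measure M {x \<in> space M. j \<le> atom_count (w x) {u j..}})
        \<le> (\<Sum>j=1..n. (exp 1 * real N powr (- \<delta>)) ^ j)"
      unfolding u_def using N \<open>0 < \<delta>\<close> by (intro sum_mono prob_atoms_above_scaled_le[OF ppp]) auto
    also have "\<dots> \<le> 2 * (exp 1 * real N powr (- \<delta>))"
      using small by (intro sum_power_le_double) auto
    finally show ?thesis .
  qed
  moreover have "real n * exp (- (real N * (real N powr (- a)) powr \<beta> /
          (real N powr (\<delta> * \<beta>) * real n powr (1 - \<beta>) / (1 - \<beta>))))
      \<le> 2 * real N powr \<gamma> * exp (- ((1 - \<beta>) / 2 * real N powr (\<beta> * \<delta>)))"
    using npos n by (intro sampling_term_le[OF \<beta> N ident])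
  ultimately show ?thesis unfolding n_def by linarith
qed

lemma ln_mult_error_terms_tendsto_0:
  assumes "a < \<gamma>" "0 < \<delta>" "0 < \<beta>" "\<beta> < 1"
  shows "(\<lambda>N::nat. ln (real N) * (exp (- real N) + exp 1 * real N powr (a - \<gamma>)
      + 2 * (exp 1 * real N powr (- \<delta>))
      + 2 * real N powr \<gamma> * exp (- ((1 - \<beta>) / 2 * real N powr (\<beta> * \<delta>))))) \<longlonglongrightarrow> 0"
proof -
  have "a - \<gamma> < 0" "0 < \<beta> * \<delta>" "0 < (1 - \<beta>) / 2" using assms by auto
  then have "((\<lambda>x::real. ln x * exp (- x)) \<longlongrightarrow> 0) at_top"
    "((\<lambda>x::real. exp 1 * (ln x * x powr (a - \<gamma>))) \<longlongrightarrow> 0) at_top"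
    "((\<lambda>x::real. 2 * exp 1 * (ln x * x powr (- \<delta>))) \<longlongrightarrow> 0) at_top"
    "((\<lambda>x::real. 2 * (ln x * x powr \<gamma> * exp (- ((1 - \<beta>) / 2 * x powr (\<beta> * \<delta>))))) \<longlongrightarrow> 0) at_top"
    using \<open>0 < \<delta>\<close> by real_asymp+
  then have "((\<lambda>x::real. ln x * (exp (- x) + exp 1 * x powr (a - \<gamma>) + 2 * (exp 1 * x powr (- \<delta>))
      + 2 * x powr \<gamma> * exp (- ((1 - \<beta>) / 2 * x powr (\<beta> * \<delta>))))) \<longlongrightarrow> 0) at_top"
    by (simp add: algebra_simps tendsto_add_zero)
  then show ?thesis by (rule filterlim_compose[OF _ filterlim_real_sequentially])
qed

lemma eventually_error_terms_small:
  assumes "a < \<gamma>" "0 < \<delta>"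
  shows "\<forall>\<^sub>F N in sequentially. 1 \<le> N \<and> exp 1 * real N powr (a - \<gamma>) \<le> 1
    \<and> 2 * (exp 1 * real N powr (- \<delta>)) \<le> 1"
proof -
  have "a - \<gamma> < 0" using assms by simp
  then have "\<forall>\<^sub>F x in at_top. exp 1 * (x::real) powr (a - \<gamma>) \<le> 1"
    "\<forall>\<^sub>F x in at_top. 2 * (exp 1 * (x::real) powr (- \<delta>)) \<le> 1"
    using assms by real_asymp+
  then show ?thesis
    using eventually_ge_at_top[of 1]
    by (auto intro!: eventually_conj elim!: eventually_compose_filterlim[OF _ filterlim_real_sequentially])
qed

theorem proposition6p1:
  fixes M :: "'a measure" and w :: "'a \<Rightarrow> nat \<Rightarrow> real"
    and \<gamma> \<beta> \<epsilon> :: real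
  assumes "\<gamma> > 1" and "\<beta> < 1" and "1 - 1 / \<gamma> < \<beta>"
    and ppp: "is_ppp_atoms M w"
    and "0 < \<epsilon>" and "\<epsilon> < (1 - \<gamma> * (1 - \<beta>)) / \<beta>"
  shows "(\<lambda>N::nat. ln (real N) *
            enn2real (\<integral>\<^sup>+ x. ennreal (measure_pmf.prob
                (sample_wor (\<lambda>i. w x i powr \<beta>) N {1..nat \<lceil>real N powr \<gamma>\<rceil>})
                {Is. \<not> ({i. 1 \<le> i \<and> w x i \<ge> real N powr (- ((1 - \<gamma> * (1 - \<beta>)) / \<beta> - \<epsilon>))}
                        \<subseteq> set Is)}) \<partial>M))
         \<longlonglongrightarrow> 0"
proof -
  define a where "a = (1 - \<gamma> * (1 - \<beta>)) / \<beta> - \<epsilon>"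
  define \<delta> where "\<delta> = \<epsilon> / 2"
  have "0 < 1 - 1 / \<gamma>" using \<open>\<gamma> > 1\<close> by (simp add: field_simps)
  then have "0 < \<beta>" using assms by linarith
  moreover have "1 * (1 - \<beta>) < \<gamma> * (1 - \<beta>)"
    using \<open>\<gamma> > 1\<close> \<open>\<beta> < 1\<close> by (intro mult_strict_right_mono) auto
  ultimately have "(1 - \<gamma> * (1 - \<beta>)) / \<beta> < 1"
    by (simp add: divide_less_eq)
  then have "a < \<gamma>" "0 < \<delta>"
    unfolding a_def \<delta>_def using assms by auto
  have "1 - a * \<beta> - \<gamma> * (1 - \<beta>) = 2 * \<beta> * \<delta>"
    unfolding a_def \<delta>_def using \<open>0 < \<beta>\<close> by (simp add: field_simps)
  note bound = expected_miss_prob_le_error_terms[OF ppp \<open>0 < \<beta>\<close> \<open>\<beta> < 1\<close> _ _ \<open>0 < \<delta>\<close> this]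
  have upper: "\<forall>\<^sub>F N in sequentially.
      ln (real N) * expected_miss_prob M w \<beta> (real N powr (- a)) (nat \<lceil>real N powr \<gamma>\<rceil>) N
        \<le> ln (real N) * (exp (- real N) + exp 1 * real N powr (a - \<gamma>) + 2 * (exp 1 * real N powr (- \<delta>))
          + 2 * real N powr \<gamma> * exp (- ((1 - \<beta>) / 2 * real N powr (\<beta> * \<delta>))))"
    using eventually_error_terms_small[OF \<open>a < \<gamma>\<close> \<open>0 < \<delta>\<close>]
    by eventually_elim (rule mult_left_mono[OF bound]; use \<open>a < \<gamma>\<close> \<open>\<gamma> > 1\<close> in simp)
  have lower: "\<forall>\<^sub>F N in sequentially.
      0 \<le> ln (real N) * expected_miss_prob M w \<beta> (real N powr (- a)) (nat \<lceil>real N powr \<gamma>\<rceil>) N"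
    using eventually_ge_at_top[of 1] by eventually_elim (simp add: expected_miss_prob_def)
  show ?thesis
    unfolding a_def[symmetric] expected_miss_prob_def[symmetric]
    by (rule tendsto_sandwich[OF lower upper tendsto_const
          ln_mult_error_terms_tendsto_0[OF \<open>a < \<gamma>\<close> \<open>0 < \<delta>\<close> \<open>0 < \<beta>\<close> \<open>\<beta> < 1\<close>]])
qed

end
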